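(* Let $n\ge 3$, let $F$ be a set of edges of $Q_n$, and let $T$ be a proper subset of the vertex set of $Q_n$ with $|T|\ge 3$ and $|T|_0\ge|T|_1$, such that every edge of $Q_n$ joining a vertex of parity 0 in $T$ to a vertex outside $T$ belongs to $F$. If the subgraph of $Q_n$ induced by $T$ is not connected, then $F$ is not minimal.
   Context: $Q_n$ is the $n$-dimensional hypercube on the binary strings of length $n$, two strings adjacent iff they differ in exactly one bit. The parity of a vertex is the number of ones in its label modulo 2. For a set $T$ of vertices, $|T|_0$ and $|T|_1$ denote the numbers of vertices of parity 0 and parity 1 in $T$. $F$ is a set of "faulty" edges; $Q_n-F$ is the graph with all vertices of $Q_n$ and the edges of $Q_n$ not in $F$. "$F$ is not minimal" means that there is a proper subset $F'\subsetneq F$ such that $Q_n-F'$ has no Hamiltonian cycle. *)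

theory Defs
  imports Main
begin

definition qverts :: "nat \<Rightarrow> bool list set" where
  "qverts n = {xs. length xs = n}"

definition qadj :: "bool list \<Rightarrow> bool list \<Rightarrow> bool" where
  "qadj u v \<longleftrightarrow> length u = length v \<and> card {i. i < length u \<and> u ! i \<noteq> v ! i} = 1"

definition qedges :: "nat \<Rightarrow> bool list set set" where
  "qedges n = {{u, v} | u v. u \<in> qverts n \<and> v \<in> qverts n \<and> qadj u v}"

definition parity :: "bool list \<Rightarrow> nat" where
  "parity xs = length (filter id xs) mod 2"

definition card_par :: "nat \<Rightarrow> bool list set \<Rightarrow> nat" where
  "card_par p T = card {x \<in> T. parity x = p}"

definition ham_cycle :: "'a set \<Rightarrow> 'a set set \<Rightarrow> 'a list \<Rightarrow> bool" where
  "ham_cycle V E cs \<longleftrightarrow> distinct cs \<and> set cs = V \<and> length cs \<ge> 3 \<and>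
     (\<forall>i < length cs. {cs ! i, cs ! ((i + 1) mod length cs)} \<in> E)"

definition has_ham_cycle :: "'a set \<Rightarrow> 'a set set \<Rightarrow> bool" where
  "has_ham_cycle V E \<longleftrightarrow> (\<exists>cs. ham_cycle V E cs)"

definition qham :: "nat \<Rightarrow> bool list set set \<Rightarrow> bool" where
  "qham n F \<longleftrightarrow> has_ham_cycle (qverts n) (qedges n - F)"

definition not_minimal :: "nat \<Rightarrow> bool list set set \<Rightarrow> bool" where
  "not_minimal n F \<longleftrightarrow> (\<exists>F'. F' \<subset> F \<and> \<not> qham n F')"

definition induced_connected :: "nat \<Rightarrow> bool list set \<Rightarrow> bool" where
  "induced_connected n T \<longleftrightarrow>
     (\<forall>u\<in>T. \<forall>v\<in>T. (u, v) \<in> {(x, y). x \<in> T \<and> y \<in> T \<and> {x, y} \<in> qedges n}\<^sup>*)"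

end

theory Submission
  imports Defs
begin

text \<open>
  Split \<open>T\<close> into nonempty parts \<open>S\<close> and \<open>W\<close> with no edge between them, where \<open>|S|\<^sub>0 \<ge> |S|\<^sub>1\<close>.
  If every neighbour of an even vertex of \<open>S\<close> lies in \<open>S\<close>, a Hamiltonian cycle maps the even
  vertices of \<open>S\<close> injectively to their odd successors in \<open>S\<close>, and \<open>|S|\<^sub>0 \<ge> |S|\<^sub>1\<close> then traps the
  cycle inside \<open>S \<noteq> V(Q\<^sub>n)\<close>. Hence already the edges \<open>F\<^sub>1 \<subseteq> F\<close> joining even vertices of \<open>S\<close> to
  vertices outside \<open>S\<close> destroy every Hamiltonian cycle. If \<open>F\<^sub>1 = F\<close>, the same argument for \<open>W\<close> in
  the fault-free (and Hamiltonian) \<open>Q\<^sub>n\<close> gives \<open>|S|\<^sub>0 > |S|\<^sub>1\<close>, and then restoring one edge of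
  \<open>F\<close> does not help: it lets at most one even vertex of \<open>S\<close> leave \<open>S\<close> along the cycle, in one
  direction only.
\<close>

definition diff_positions :: "bool list \<Rightarrow> bool list \<Rightarrow> nat set" where
  "diff_positions u v = {i. i < length u \<and> u ! i \<noteq> v ! i}"

lemma finite_diff_positions: "finite (diff_positions u v)"
  unfolding diff_positions_def by auto

lemma card_diff_positions_Cons:
  "card (diff_positions (a # u) (b # v)) = (if a = b then 0 else 1) + card (diff_positions u v)"
proof -
  have "diff_positions (a # u) (b # v) = (if a = b then {} else {0}) \<union> Suc ` diff_positions u v"
    (is "?l = ?r")
  proof (rule set_eqI)
    fix i
    show "i \<in> ?l \<longleftrightarrow> i \<in> ?r"
      by (cases i) (auto simp: diff_positions_def)
  qed
  moreover have "card (Suc ` diff_positions u v) = card (diff_positions u v)"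
    by (simp add: card_image)
  ultimately show ?thesis
    using finite_diff_positions[of u v] by auto
qed

lemma diff_positions_empty_iff: "length u = length v \<Longrightarrow> diff_positions u v = {} \<longleftrightarrow> u = v"
  unfolding diff_positions_def by (auto simp: list_eq_iff_nth_eq)

lemma qadj_iff_card_diff_positions: "qadj u v \<longleftrightarrow> length u = length v \<and> card (diff_positions u v) = 1"
  unfolding qadj_def diff_positions_def by simp

lemma qadj_commute: "qadj u v \<longleftrightarrow> qadj v u"
proof -
  have "length u = length v \<Longrightarrow> diff_positions u v = diff_positions v u"
    unfolding diff_positions_def by auto
  then show ?thesis
    unfolding qadj_iff_card_diff_positions by metis
qed

lemma qadj_Cons:
  "qadj (a # u) (b # v) \<longleftrightarrow> length u = length v \<and> (if a = b then qadj u v else u = v)"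
proof (cases "length u = length v")
  case True
  then have "card (diff_positions u v) = 0 \<longleftrightarrow> u = v"
    using diff_positions_empty_iff finite_diff_positions by simp
  then show ?thesis
    using True by (auto simp: qadj_iff_card_diff_positions card_diff_positions_Cons)
qed (simp add: qadj_iff_card_diff_positions)

lemma even_count_ones_plus_diff_positions:
  "length u = length v \<Longrightarrow>
     even (length (filter id u) + length (filter id v) + card (diff_positions u v))"
proof (induction u v rule: list_induct2)
  case Nil
  then show ?case by (simp add: diff_positions_def)
next
  case (Cons x xs y ys)
  then show ?case
    by (cases x; cases y; simp add: card_diff_positions_Cons; presburger)
qed

lemma parity_eq_0_or_1: "parity u = 0 \<or> parity u = 1"
  unfolding parity_def by auto

lemma qadj_parity: "qadj u v \<Longrightarrow> parity u \<noteq> parity v"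
proof -
  assume "qadj u v"
  then have "even (length (filter id u) + length (filter id v) + 1)"
    using even_count_ones_plus_diff_positions[of u v] by (simp add: qadj_iff_card_diff_positions)
  then show ?thesis
    unfolding parity_def by (auto simp: mod2_eq_if)
qed

lemma doubleton_in_qedges_iff: "{u, v} \<in> qedges n \<longleftrightarrow> u \<in> qverts n \<and> v \<in> qverts n \<and> qadj u v"
  unfolding qedges_def by (auto simp: doubleton_eq_iff qadj_commute)

lemma finite_qverts: "finite (qverts n)"
  using finite_lists_length_eq[of "UNIV :: bool set" n] by (simp add: qverts_def)

lemma card_par_Un:
  assumes "finite S" "finite W" "S \<inter> W = {}"
  shows "card_par p (S \<union> W) = card_par p S + card_par p W"
proof -
  have "{x \<in> S \<union> W. parity x = p} = {x \<in> S. parity x = p} \<union> {x \<in> W. parity x = p}"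
    by auto
  then show ?thesis
    unfolding card_par_def using assms by (simp add: card_Un_disjoint disjoint_iff)
qed

section \<open>A Hamiltonian cycle of the fault-free hypercube\<close>

fun gray :: "nat \<Rightarrow> bool list list" where
  "gray 0 = [[]]"
| "gray (Suc n) = map (Cons False) (gray n) @ map (Cons True) (rev (gray n))"

lemma gray_not_Nil: "gray n \<noteq> []"
  by (induction n) auto

lemma length_gray: "length (gray n) = 2 ^ n"
  by (induction n) auto

lemma set_gray: "set (gray n) = qverts n"
proof (induction n)
  case 0
  then show ?case by (auto simp: qverts_def)
next
  case (Suc n)
  have "b # y \<in> set (gray (Suc n))" if "length y = n" for b y
    using that Suc by (cases b) (auto simp: qverts_def)
  then have "x \<in> set (gray (Suc n))" if "length x = Suc n" for x
    using that by (cases x) auto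
  then show ?case
    using Suc by (auto simp: qverts_def)
qed

lemma distinct_gray: "distinct (gray n)"
  by (induction n) (auto simp: distinct_map)

lemma successively_qadj_gray: "successively qadj (gray n)"
proof (induction n)
  case (Suc n)
  have len: "length x = n" if "x \<in> set (gray n)" for x
    using that set_gray by (auto simp: qverts_def)
  have "successively qadj (map (Cons False) (gray n))"
    unfolding successively_map using Suc
    by (rule successively_mono) (auto simp: qadj_Cons len)
  moreover have "successively qadj (map (Cons True) (rev (gray n)))"
    unfolding successively_map successively_rev using Suc
    by (rule successively_mono) (auto simp: qadj_Cons qadj_commute len)
  moreover have "qadj (last (map (Cons False) (gray n))) (hd (map (Cons True) (rev (gray n))))"
    using gray_not_Nil[of n] by (simp add: last_map hd_map hd_rev qadj_Cons)
  ultimately show ?case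
    by (simp add: successively_append_iff)
qed simp

lemma qadj_last_hd_gray: "0 < n \<Longrightarrow> qadj (last (gray n)) (hd (gray n))"
  using gray_not_Nil by (cases n) (auto simp: last_map last_rev hd_map qadj_Cons)

lemma ham_cycle_gray:
  assumes "2 \<le> n"
  shows "ham_cycle (qverts n) (qedges n) (gray n)"
  unfolding ham_cycle_def
proof (intro conjI allI impI)
  let ?L = "length (gray n)"
  show "distinct (gray n)" "set (gray n) = qverts n"
    by (simp_all add: distinct_gray set_gray)
  have "(2::nat) ^ 2 \<le> 2 ^ n"
    using assms by (intro power_increasing) auto
  then show "3 \<le> ?L"
    by (simp add: length_gray)
  fix i
  assume i: "i < ?L"
  have "qadj (gray n ! i) (gray n ! ((i + 1) mod ?L))"
  proof (cases "Suc i < ?L")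
    case True
    then show ?thesis
      using successively_nth[OF successively_qadj_gray] by simp
  next
    case False
    then have "Suc i = ?L"
      using i by simp
    then have "gray n ! i = last (gray n)" "(i + 1) mod ?L = 0"
      using gray_not_Nil[of n] by (auto simp: last_conv_nth dest: sym)
    then show ?thesis
      using qadj_last_hd_gray[of n] assms gray_not_Nil[of n] by (simp add: hd_conv_nth)
  qed
  moreover have "(i + 1) mod ?L < ?L"
    using i by (intro mod_less_divisor) auto
  then have "gray n ! i \<in> qverts n" "gray n ! ((i + 1) mod ?L) \<in> qverts n"
    using i set_gray[of n] by (metis nth_mem)+
  ultimately show "{gray n ! i, gray n ! ((i + 1) mod ?L)} \<in> qedges n"
    by (simp add: doubleton_in_qedges_iff)
qed

lemma qham_no_faults: "2 \<le> n \<Longrightarrow> qham n {}"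
  unfolding qham_def has_ham_cycle_def using ham_cycle_gray by auto

section \<open>Counting along a Hamiltonian cycle\<close>

definition cyc_succ :: "nat \<Rightarrow> nat \<Rightarrow> nat" where
  "cyc_succ L i = (if Suc i < L then Suc i else 0)"

definition cyc_pred :: "nat \<Rightarrow> nat \<Rightarrow> nat" where
  "cyc_pred L i = (if i = 0 then L - 1 else i - 1)"

lemma cyc_succ_less: "i < L \<Longrightarrow> cyc_succ L i < L"
  unfolding cyc_succ_def by auto

lemma cyc_pred_less: "i < L \<Longrightarrow> cyc_pred L i < L"
  unfolding cyc_pred_def by auto

lemma cyc_succ_cyc_pred: "i < L \<Longrightarrow> cyc_succ L (cyc_pred L i) = i"
  unfolding cyc_succ_def cyc_pred_def by auto

lemma cyc_pred_cyc_succ: "i < L \<Longrightarrow> cyc_pred L (cyc_succ L i) = i"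
  unfolding cyc_succ_def cyc_pred_def by auto

lemma inj_on_cyc_succ: "inj_on (cyc_succ L) {..<L}"
  by (rule inj_onI) (metis lessThan_iff cyc_pred_cyc_succ)

lemma inj_on_cyc_pred: "inj_on (cyc_pred L) {..<L}"
  by (rule inj_onI) (metis lessThan_iff cyc_succ_cyc_pred)

lemma cyc_pred_neq_cyc_succ: "3 \<le> L \<Longrightarrow> i < L \<Longrightarrow> cyc_pred L i \<noteq> cyc_succ L i"
  unfolding cyc_succ_def cyc_pred_def by auto

lemma cyc_pred_closed_indices:
  assumes "j \<in> Q" "\<forall>k\<in>Q. cyc_pred L k \<in> Q" "i < L"
  shows "i \<in> Q"
proof -
  have down: "k - d \<in> Q" if "k \<in> Q" for k d
  proof (induction d)
    case (Suc d)
    then show ?case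
      using assms(2) that by (cases "k - d = 0") (auto simp: cyc_pred_def diff_Suc split: nat.split)
  qed (simp add: that)
  have "0 \<in> Q"
    using down[OF assms(1), of j] by simp
  then have "L - 1 \<in> Q"
    using assms(2) by (force simp: cyc_pred_def)
  then show ?thesis
    using down[of "L - 1" "L - 1 - i"] assms(3) by simp
qed

lemma Suc_mod_eq_cyc_succ:
  assumes "i < L"
  shows "Suc i mod L = cyc_succ L i"
proof (cases "Suc i = L")
  case False
  then show ?thesis
    using assms by (auto simp: cyc_succ_def)
qed (simp add: cyc_succ_def)

lemma ham_cycle_edge_cyc_succ:
  "ham_cycle V E cs \<Longrightarrow> i < length cs \<Longrightarrow> {cs ! i, cs ! cyc_succ (length cs) i} \<in> E"
  unfolding ham_cycle_def by (simp add: Suc_mod_eq_cyc_succ)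

lemma ham_cycle_edge_cyc_pred:
  "ham_cycle V E cs \<Longrightarrow> i < length cs \<Longrightarrow> {cs ! i, cs ! cyc_pred (length cs) i} \<in> E"
  using ham_cycle_edge_cyc_succ[of V E cs "cyc_pred (length cs) i"]
  by (simp add: cyc_pred_less cyc_succ_cyc_pred insert_commute)

lemma card_positions:
  assumes "distinct cs" "A \<subseteq> set cs"
  shows "card {i. i < length cs \<and> cs ! i \<in> A} = card A"
proof -
  have "nth cs ` {i. i < length cs \<and> cs ! i \<in> A} = A"
    using assms(2) by (auto simp: image_iff) (metis in_set_conv_nth subsetD)
  moreover have "inj_on (nth cs) {i. i < length cs \<and> cs ! i \<in> A}"
    using assms(1) by (intro inj_on_nth) auto
  ultimately show ?thesis
    using card_image by fastforce
qed

lemma card_le_by_positions: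
  assumes "distinct cs" "A \<subseteq> set cs" "B \<subseteq> set cs"
    and "inj_on g {..<length cs}"
    and "\<forall>i<length cs. cs ! i \<in> A \<longrightarrow> g i < length cs \<and> cs ! g i \<in> B"
  shows "card A \<le> card B"
proof -
  have "g ` {i. i < length cs \<and> cs ! i \<in> A} \<subseteq> {i. i < length cs \<and> cs ! i \<in> B}"
    using assms(5) by auto
  moreover have "inj_on g {i. i < length cs \<and> cs ! i \<in> A}"
    using assms(4) by (rule inj_on_subset) auto
  ultimately have "card {i. i < length cs \<and> cs ! i \<in> A} \<le> card {i. i < length cs \<and> cs ! i \<in> B}"
    by (intro card_inj_on_le) auto
  then show ?thesis
    using card_positions assms(1-3) by metis
qed

text \<open>
  The successors of the \<open>A\<close>-positions of the cycle fill all \<open>B\<close>-positions, so the positions of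
  \<open>A \<union> B\<close> are closed under going backwards along the cycle.
\<close>
lemma ham_cycle_neighbours_cover:
  assumes h: "ham_cycle V E cs" and "A \<subseteq> V" "B \<subseteq> V" "A \<noteq> {}"
    and adj: "\<forall>x\<in>A. \<forall>y. {x, y} \<in> E \<longrightarrow> y \<in> B" and "card B \<le> card A"
  shows "A \<union> B = V"
proof -
  define L where "L = length cs"
  define P0 where "P0 = {i. i < L \<and> cs ! i \<in> A}"
  define P1 where "P1 = {i. i < L \<and> cs ! i \<in> B}"
  have cs: "distinct cs" "set cs = V"
    using h unfolding ham_cycle_def L_def by auto
  have "cyc_succ L ` P0 \<subseteq> P1"
    using adj ham_cycle_edge_cyc_succ[OF h] cyc_succ_less[of _ L]
    unfolding P0_def P1_def L_def by auto
  moreover have "card (cyc_succ L ` P0) = card P0"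
    using inj_on_cyc_succ by (intro card_image, rule inj_on_subset) (auto simp: P0_def)
  moreover have "card P1 \<le> card P0"
    using card_positions[of cs] cs assms(2,3,6) unfolding P0_def P1_def L_def by simp
  ultimately have succ_P0: "cyc_succ L ` P0 = P1"
    by (intro card_seteq) (auto simp: P1_def)
  have closed: "\<forall>k\<in>P0 \<union> P1. cyc_pred L k \<in> P0 \<union> P1"
  proof
    fix k
    assume "k \<in> P0 \<union> P1"
    then consider "k \<in> P0" | i where "i \<in> P0" "k = cyc_succ L i"
      using succ_P0 by auto
    then show "cyc_pred L k \<in> P0 \<union> P1"
    proof cases
      case 1
      then show ?thesis
        using adj ham_cycle_edge_cyc_pred[OF h] cyc_pred_less unfolding P0_def P1_def L_def by auto
    next
      case 2
      then show ?thesis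
        using cyc_pred_cyc_succ by (auto simp: P0_def)
    qed
  qed
  obtain x where "x \<in> A"
    using \<open>A \<noteq> {}\<close> by auto
  then obtain j where "j \<in> P0"
    using \<open>A \<subseteq> V\<close> cs(2) unfolding P0_def L_def by (metis (mono_tags) in_set_conv_nth mem_Collect_eq subsetD)
  then have all: "i \<in> P0 \<union> P1" if "i < L" for i
    using cyc_pred_closed_indices[OF _ closed that] by (auto simp: P0_def)
  have "V \<subseteq> A \<union> B"
  proof
    fix x
    assume "x \<in> V"
    then obtain i where "i < L" "cs ! i = x"
      using cs(2) by (auto simp: L_def in_set_conv_nth)
    then show "x \<in> A \<union> B"
      using all[of i] by (auto simp: P0_def P1_def)
  qed
  then show ?thesis
    using assms(2,3) by auto
qed

text \<open>
  As \<open>e\<close> has at most one end in \<open>A\<close> and the cycle has length at least 3, \<open>e\<close> cannot be both the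
  successor edge and the predecessor edge of \<open>A\<close>-positions; so going forwards or going backwards
  injects the \<open>A\<close>-positions into the \<open>B\<close>-positions.
\<close>
lemma ham_cycle_card_le_neighbours:
  assumes h: "ham_cycle V E cs" and "A \<subseteq> V" "B \<subseteq> V"
    and adj: "\<forall>x\<in>A. \<forall>y. {x, y} \<in> E \<longrightarrow> {x, y} \<noteq> e \<longrightarrow> y \<in> B"
    and e: "\<forall>x\<in>A. \<forall>y\<in>A. e \<noteq> {x, y}"
  shows "card A \<le> card B"
proof -
  define L where "L = length cs"
  have cs: "distinct cs" "set cs = V" "3 \<le> L"
    using h unfolding ham_cycle_def L_def by auto
  show ?thesis
  proof (cases "\<forall>i<L. cs ! i \<in> A \<longrightarrow> cs ! cyc_succ L i \<in> B")
    case True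
    then show ?thesis
      using assms(2,3) cs inj_on_cyc_succ[of L] cyc_succ_less[of _ L]
      by (intro card_le_by_positions[of cs _ _ "cyc_succ L"]) (auto simp: L_def)
  next
    case False
    then obtain i0 where i0: "i0 < L" "cs ! i0 \<in> A" "cs ! cyc_succ L i0 \<notin> B"
      by auto
    then have e0: "e = {cs ! i0, cs ! cyc_succ L i0}"
      using adj ham_cycle_edge_cyc_succ[OF h] unfolding L_def by auto
    have "cs ! cyc_pred L i \<in> B" if i: "i < L" "cs ! i \<in> A" for i
    proof (rule ccontr)
      assume "cs ! cyc_pred L i \<notin> B"
      then have "e = {cs ! i, cs ! cyc_pred L i}"
        using adj ham_cycle_edge_cyc_pred[OF h] i unfolding L_def by auto
      then have "cs ! i = cs ! i0" "cs ! cyc_pred L i = cs ! cyc_succ L i0"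
        using e e0 i i0 by (auto simp: doubleton_eq_iff)
      then have "i = i0" "cyc_pred L i = cyc_succ L i0"
        using cs i i0 cyc_pred_less[of i L] cyc_succ_less[of i0 L]
        by (auto simp: nth_eq_iff_index_eq L_def)
      then show False
        using cyc_pred_neq_cyc_succ cs(3) i0(1) by simp
    qed
    then show ?thesis
      using assms(2,3) cs inj_on_cyc_pred[of L] cyc_pred_less[of _ L]
      by (intro card_le_by_positions[of cs _ _ "cyc_pred L"]) (auto simp: L_def)
  qed
qed

section \<open>Faults isolating the even vertices of a set\<close>

definition even_closed :: "bool list set set \<Rightarrow> bool list set \<Rightarrow> bool" where
  "even_closed E S \<longleftrightarrow> (\<forall>x\<in>S. \<forall>y. parity x = 0 \<longrightarrow> {x, y} \<in> E \<longrightarrow> y \<in> S)"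

lemma even_closed_neighbours_odd:
  assumes "even_closed E S" "E \<subseteq> qedges n" "x \<in> S" "parity x = 0" "{x, y} \<in> E"
  shows "y \<in> S" "parity y = 1"
proof -
  show "y \<in> S"
    using assms(1,3-5) unfolding even_closed_def by blast
  have "qadj x y"
    using assms(2,5) by (auto simp: doubleton_in_qedges_iff)
  then show "parity y = 1"
    using qadj_parity[of x y] parity_eq_0_or_1[of y] assms(4) by auto
qed

lemma not_qham_if_even_closed:
  assumes "S \<subseteq> qverts n" "S \<noteq> qverts n" "S \<noteq> {}" "card_par 1 S \<le> card_par 0 S"
    and "even_closed (qedges n - F) S"
  shows "\<not> qham n F"
proof
  assume "qham n F"
  then obtain cs where h: "ham_cycle (qverts n) (qedges n - F) cs"
    by (auto simp: qham_def has_ham_cycle_def)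
  define A where "A = {x \<in> S. parity x = 0}"
  define B where "B = {x \<in> S. parity x = 1}"
  have S: "S = A \<union> B"
    using parity_eq_0_or_1 by (auto simp: A_def B_def)
  have "finite B"
    using assms(1) finite_qverts[of n] by (auto simp: B_def intro: finite_subset)
  moreover have "card B \<le> card A"
    using assms(4) by (simp add: A_def B_def card_par_def)
  ultimately have "A \<noteq> {}"
    using assms(3) S by auto
  have "y \<in> B" if "x \<in> A" "{x, y} \<in> qedges n - F" for x y
    using even_closed_neighbours_odd[OF assms(5) Diff_subset _ _ that(2)] that(1)
    by (auto simp: A_def B_def)
  then have "A \<union> B = qverts n"
    using assms(1) S \<open>A \<noteq> {}\<close> \<open>card B \<le> card A\<close>
    by (intro ham_cycle_neighbours_cover[OF h]) auto
  then show False
    using assms(2) S by simp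
qed

lemma not_qham_if_even_closed_but_one:
  assumes "S \<subseteq> qverts n" "card_par 1 S < card_par 0 S"
    and "even_closed (qedges n - F - {e}) S"
    and "\<forall>x\<in>S. \<forall>y\<in>S. parity x = 0 \<longrightarrow> parity y = 0 \<longrightarrow> e \<noteq> {x, y}"
  shows "\<not> qham n F"
proof
  assume "qham n F"
  then obtain cs where h: "ham_cycle (qverts n) (qedges n - F) cs"
    by (auto simp: qham_def has_ham_cycle_def)
  have "y \<in> {x \<in> S. parity x = 1}"
    if "x \<in> {x \<in> S. parity x = 0}" "{x, y} \<in> qedges n - F" "{x, y} \<noteq> e" for x y
    using even_closed_neighbours_odd[OF assms(3) _ _ _, of n x y] that by auto
  then have "card {x \<in> S. parity x = 0} \<le> card {x \<in> S. parity x = 1}"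
    using assms(1,4) by (intro ham_cycle_card_le_neighbours[OF h, of _ _ e]) blast+
  then show False
    using assms(2) by (simp add: card_par_def)
qed

lemma not_induced_connected_split:
  assumes "\<not> induced_connected n T"
  obtains S W where "S \<union> W = T" "S \<inter> W = {}" "S \<noteq> {}" "W \<noteq> {}"
    "\<forall>x\<in>S. \<forall>y\<in>W. {x, y} \<notin> qedges n"
proof -
  define R where "R = {(x, y). x \<in> T \<and> y \<in> T \<and> {x, y} \<in> qedges n}"
  obtain a b where ab: "a \<in> T" "b \<in> T" "(a, b) \<notin> R\<^sup>*"
    using assms unfolding induced_connected_def R_def by blast
  define S where "S = {y \<in> T. (a, y) \<in> R\<^sup>*}"
  have "{x, y} \<notin> qedges n" if "x \<in> S" "y \<in> T - S" for x y
  proof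
    assume "{x, y} \<in> qedges n"
    then have "(a, y) \<in> R\<^sup>*"
      using that rtrancl_into_rtrancl[of a x R y] by (auto simp: S_def R_def)
    then show False
      using that by (auto simp: S_def)
  qed
  moreover have "a \<in> S" "b \<in> T - S"
    using ab by (auto simp: S_def)
  ultimately show thesis
    by (intro that[of S "T - S"]) (auto simp: S_def)
qed

lemma not_minimal_if_separated:
  assumes "2 \<le> n" "T \<subset> qverts n"
    and faults: "\<forall>u\<in>T. \<forall>v\<in>qverts n - T. parity u = 0 \<longrightarrow> {u, v} \<in> qedges n \<longrightarrow> {u, v} \<in> F"
    and split: "S \<union> W = T" "S \<inter> W = {}" "S \<noteq> {}" "W \<noteq> {}"
    and separated: "\<forall>x\<in>S. \<forall>y\<in>W. {x, y} \<notin> qedges n"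
    and "card_par 1 S \<le> card_par 0 S" "card_par 1 T \<le> card_par 0 T"
  shows "not_minimal n F"
proof -
  define F1 where "F1 = {{u, v} | u v. u \<in> S \<and> parity u = 0 \<and> v \<notin> S \<and> {u, v} \<in> qedges n}"
  have SW: "S \<subseteq> qverts n" "S \<noteq> qverts n" "W \<subseteq> qverts n" "W \<noteq> qverts n"
    using assms(2) split by auto
  have "F1 \<subseteq> F"
  proof
    fix f
    assume "f \<in> F1"
    then obtain u v where f: "f = {u, v}" "u \<in> S" "parity u = 0" "v \<notin> S" "{u, v} \<in> qedges n"
      by (auto simp: F1_def)
    then have "v \<in> qverts n - T"
      using separated split by (auto simp: doubleton_in_qedges_iff)
    then show "f \<in> F"
      using faults f split by blast
  qed
  have closed_S: "even_closed (qedges n - F1) S"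
    unfolding even_closed_def F1_def by blast
  then have no_ham_F1: "\<not> qham n F1"
    by (rule not_qham_if_even_closed[OF SW(1,2) split(3) assms(9)])
  show ?thesis
  proof (cases "F1 = F")
    case False
    then show ?thesis
      unfolding not_minimal_def using \<open>F1 \<subseteq> F\<close> no_ham_F1 by blast
  next
    case True
    have closed_W: "even_closed (qedges n - {}) W"
      unfolding even_closed_def
    proof (intro ballI allI impI)
      fix x y
      assume x: "x \<in> W" "parity x = 0" and xy: "{x, y} \<in> qedges n - {}"
      have "y \<notin> S"
        using separated x xy by (metis insert_commute Diff_empty)
      have "x \<in> T" "x \<notin> S"
        using x split by auto
      have "{x, y} \<notin> F"
        using True \<open>x \<notin> S\<close> \<open>y \<notin> S\<close> by (auto simp: F1_def doubleton_eq_iff)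
      moreover have "y \<in> qverts n"
        using xy by (simp add: doubleton_in_qedges_iff)
      ultimately have "y \<in> T"
        using faults[rule_format, of x y] \<open>x \<in> T\<close> x(2) xy by blast
      then show "y \<in> W"
        using split \<open>y \<notin> S\<close> by blast
    qed
    have "finite S" "finite W"
      using SW finite_qverts finite_subset by blast+
    then have card_T: "card_par p T = card_par p S + card_par p W" for p
      using card_par_Un split by blast
    have "\<not> qham n {}" if "card_par 1 W \<le> card_par 0 W"
      using not_qham_if_even_closed[OF SW(3,4) split(4) that closed_W] .
    then have "card_par 1 S < card_par 0 S"
      using qham_no_faults[OF assms(1)] card_T[of 0] card_T[of 1] assms(10) by linarith
    have "F1 \<noteq> {}"
      using no_ham_F1 qham_no_faults[OF assms(1)] by blast
    then obtain e where "e \<in> F"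
      using True by blast
    have "\<not> qham n (F - {e})"
    proof (rule not_qham_if_even_closed_but_one[OF SW(1) \<open>card_par 1 S < card_par 0 S\<close>])
      have "qedges n - (F - {e}) - {e} = qedges n - F1"
        using True \<open>e \<in> F\<close> by blast
      then show "even_closed (qedges n - (F - {e}) - {e}) S"
        using closed_S by simp
      show "\<forall>x\<in>S. \<forall>y\<in>S. parity x = 0 \<longrightarrow> parity y = 0 \<longrightarrow> e \<noteq> {x, y}"
        using \<open>e \<in> F\<close> True by (auto simp: F1_def doubleton_eq_iff)
    qed
    then show ?thesis
      unfolding not_minimal_def using \<open>e \<in> F\<close> by blast
  qed
qed

theorem lemma4:
  fixes n :: nat and F :: "bool list set set" and T :: "bool list set"
  assumes "n \<ge> 3"
    and "F \<subseteq> qedges n"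
    and "T \<subset> qverts n"
    and "card T \<ge> 3"
    and "card_par 0 T \<ge> card_par 1 T"
    and "\<forall>u\<in>T. \<forall>v\<in>qverts n - T. parity u = 0 \<longrightarrow> {u, v} \<in> qedges n \<longrightarrow> {u, v} \<in> F"
    and "\<not> induced_connected n T"
  shows "not_minimal n F"
proof -
  have "2 \<le> n"
    using assms(1) by simp
  obtain S W where split: "S \<union> W = T" "S \<inter> W = {}" "S \<noteq> {}" "W \<noteq> {}"
    and separated: "\<forall>x\<in>S. \<forall>y\<in>W. {x, y} \<notin> qedges n"
    using not_induced_connected_split[OF assms(7)] by blast
  have "finite S" "finite W"
    using assms(3) split finite_qverts[of n] finite_subset by blast+
  then have "card_par p T = card_par p S + card_par p W" for p
    using card_par_Un split by blast
  then consider "card_par 1 S \<le> card_par 0 S" | "card_par 1 W \<le> card_par 0 W"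
    using assms(5) by fastforce
  then show ?thesis
  proof cases
    case 1
    show ?thesis
      by (rule not_minimal_if_separated[OF \<open>2 \<le> n\<close> assms(3,6) split separated 1 assms(5)])
  next
    case 2
    have "\<forall>y\<in>W. \<forall>x\<in>S. {y, x} \<notin> qedges n"
      using separated by (metis insert_commute)
    moreover have "W \<union> S = T" "W \<inter> S = {}"
      using split by auto
    ultimately show ?thesis
      using not_minimal_if_separated[OF \<open>2 \<le> n\<close> assms(3,6) _ _ split(4,3) _ 2 assms(5)] by blast
  qed
qed

end
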